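(* Let $\mu$ be a probability measure on $\mathbb{R}$. For $0<t<1$ and $x\in\mathbb{R}$, let $$d_{t}(x)=\frac{-\log\mu[x-t/2,x+t/2]}{|\log t|}.$$ Then $$\delta_{c}(\mu)=\limsup_{t\to0}\int d_{t}(y)\,d\mu(y).$$
   Context: For $t>0$, let $\nu_t$ be the centered Gaussian law on $\mathbb{R}$ with variance $t^2$, i.e. $\nu_t(dx)=(2\pi t^2)^{-1/2}e^{-x^2/(2t^2)}dx$, and let $\mu_t=\mu*\nu_t$. For a non-negative density $p$, $H(p(x)\,dx)=\int p(x)\log p(x)\,dx$. The classical entropy dimension of a probability measure $\mu$ on $\mathbb{R}$ is $$\delta_c(\mu)=1-\liminf_{t\to0}\frac{H(\mu_t)}{|\log t|}.$$ *)

theory Defs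
  imports "HOL-Probability.Probability" "HOL-Probability.Convolution"
begin

definition gauss_law :: "real \<Rightarrow> real measure" where
  "gauss_law t = density lborel (\<lambda>x. ennreal (normal_density 0 t x))"

definition smoothed :: "real measure \<Rightarrow> real \<Rightarrow> real measure" where
  "smoothed \<mu> t = convolution \<mu> (gauss_law t)"

definition entropy_H :: "(real \<Rightarrow> ennreal) \<Rightarrow> ereal" where
  "entropy_H p =
     enn2ereal (\<integral>\<^sup>+ x. ennreal (max 0 (enn2real (p x) * ln (enn2real (p x)))) \<partial>lborel)
   - enn2ereal (\<integral>\<^sup>+ x. ennreal (max 0 (- (enn2real (p x) * ln (enn2real (p x))))) \<partial>lborel)"

definition entropy_meas :: "real measure \<Rightarrow> ereal" where
  "entropy_meas M = entropy_H (RN_deriv lborel M)"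

definition classical_entropy_dim :: "real measure \<Rightarrow> ereal" where
  "classical_entropy_dim \<mu> =
     1 - Liminf (at_right 0) (\<lambda>t. entropy_meas (smoothed \<mu> t) / ereal \<bar>ln t\<bar>)"

definition local_dim_t :: "real measure \<Rightarrow> real \<Rightarrow> real \<Rightarrow> real" where
  "local_dim_t \<mu> t x = - ln (measure \<mu> {x - t/2 .. x + t/2}) / \<bar>ln t\<bar>"

end

theory Submission
  imports Defs "HOL-Real_Asymp.Real_Asymp"
begin

(* Write p_t for the density of mu_t and m_t(y) = mu[y - t/2, y + t/2], and integrate
  pointwise inequalities against the coupling phi_t(x - y) dx dmu(y), whose marginals are
  p_t(x) dx and mu.  From below, p_t(x) >= m_t(y) phi_t(|x - y| + t/2) gives
  -H(mu_t) + |log t| <= int -log m_t dmu + O(1).  From above, log c <= c - 1 applied to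
  c = p_t(x) e^{-|x - y|/t} / (phi_t(x - y) m_t(y)) gives the reverse inequality up to O(1);
  the error term is controlled by the maximal-function type estimate
  int e^{-|x - y|/t} / m_t(y) dmu(y) <= 12.  So 1 - H(mu_t)/|log t| and int d_t dmu differ
  by O(1/|log t|), and their upper limits coincide. *)

lemma Limsup_mono_up_to_null:
  fixes u v :: "'a \<Rightarrow> ereal" and e :: "'a \<Rightarrow> real"
  assumes e: "(e \<longlongrightarrow> 0) F" and F: "F \<noteq> bot"
    and le: "eventually (\<lambda>x. u x \<le> v x + ereal (e x)) F"
  shows "Limsup F u \<le> Limsup F v"
proof (rule ereal_le_epsilon2)
  fix \<epsilon> :: real assume "0 < \<epsilon>"
  then have "eventually (\<lambda>x. e x < \<epsilon>) F"
    using e by (simp add: order_tendstoD(2))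
  with le have "eventually (\<lambda>x. u x \<le> v x + ereal \<epsilon>) F"
  proof eventually_elim
    case (elim x)
    then have "v x + ereal (e x) \<le> v x + ereal \<epsilon>" by (intro add_left_mono) simp
    with elim show ?case by order
  qed
  then have "Limsup F u \<le> Limsup F (\<lambda>x. v x + ereal \<epsilon>)"
    by (rule Limsup_mono)
  also have "\<dots> = Limsup F v + ereal \<epsilon>"
    using F by (intro Limsup_add_ereal_right) auto
  finally show "Limsup F u \<le> Limsup F v + ereal \<epsilon>" .
qed

lemma Limsup_one_minus:
  fixes g :: "'a \<Rightarrow> ereal"
  assumes "F \<noteq> bot"
  shows "Limsup F (\<lambda>x. 1 - g x) = 1 - Liminf F g"
proof -
  have "Limsup F (\<lambda>x. 1 - g x) = Limsup F (\<lambda>x. 1 + (- g x))"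
    by (simp add: minus_ereal_def)
  also have "\<dots> = 1 + Limsup F (\<lambda>x. - g x)"
    by (rule Limsup_add_ereal_left[OF assms]) simp
  also have "\<dots> = 1 - Liminf F g"
    by (simp add: ereal_Limsup_uminus minus_ereal_def)
  finally show ?thesis .
qed

lemma tendsto_divide_abs_ln_at_right_0: "((\<lambda>t::real. c / \<bar>ln t\<bar>) \<longlongrightarrow> 0) (at_right 0)"
  by real_asymp

lemma one_minus_normalized_diff_close:
  fixes P N A :: ennreal and a c :: real
  assumes a: "0 < a" and c: "0 \<le> c" and P: "P < \<infinity>"
    and lower: "N + ennreal a \<le> A + P + ennreal c"
    and upper: "P + A \<le> N + ennreal a + ennreal c"
  shows "1 - (enn2ereal P - enn2ereal N) / ereal a \<le> enn2ereal (A / ennreal a) + ereal (c / a)"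
    and "enn2ereal (A / ennreal a) \<le> 1 - (enn2ereal P - enn2ereal N) / ereal a + ereal (c / a)"
proof -
  from P obtain p where p: "P = ennreal p" "0 \<le> p" by (cases P) auto
  have "1 - (enn2ereal P - enn2ereal N) / ereal a \<le> enn2ereal (A / ennreal a) + ereal (c / a) \<and>
    enn2ereal (A / ennreal a) \<le> 1 - (enn2ereal P - enn2ereal N) / ereal a + ereal (c / a)"
  proof (cases "A = \<infinity>")
    case True
    with upper have "N = \<infinity>" by (simp add: ennreal_add_eq_top top_unique)
    with True a p show ?thesis by (simp add: ennreal_top_divide divide_ereal_def)
  next
    case False
    then obtain r where r: "A = ennreal r" "0 \<le> r" by (cases A) auto
    have "N \<le> A + P + ennreal c"
      using lower by (rule order_trans[rotated]) simp
    also have "\<dots> < \<infinity>" using r p by simp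
    finally obtain n where n: "N = ennreal n" "0 \<le> n" by (cases N) auto
    from lower upper have "n + a \<le> r + p + c" "p + r \<le> n + a + c"
      using a c n p r by (simp_all flip: ennreal_plus del: ennreal_plus)
    then have "(a - (p - n)) / a \<le> (r + c) / a" "r / a \<le> (a - (p - n) + c) / a"
      using a by (intro divide_right_mono; linarith)+
    then show ?thesis
      using a n p r by (simp add: divide_ennreal diff_divide_distrib add_divide_distrib one_ereal_def)
  qed
  then show "1 - (enn2ereal P - enn2ereal N) / ereal a \<le> enn2ereal (A / ennreal a) + ereal (c / a)"
    and "enn2ereal (A / ennreal a) \<le> 1 - (enn2ereal P - enn2ereal N) / ereal a + ereal (c / a)"
    by auto
qed

lemma abs_le_one_plus_square: "\<bar>v::real\<bar> \<le> 1 + v\<^sup>2"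
proof (cases "\<bar>v\<bar> \<le> 1")
  case False
  then have "\<bar>v\<bar> * 1 \<le> \<bar>v\<bar> * \<bar>v\<bar>" by (intro mult_left_mono) auto
  then show ?thesis by (simp add: power2_eq_square abs_mult_self_eq)
qed (simp add: add_increasing2)

lemma ennreal_mult_inverse_le_1: "ennreal a * inverse (ennreal a) \<le> 1"
  by (cases "a \<le> 0") (auto simp: ennreal_neg inverse_ennreal simp flip: ennreal_mult')

lemma nn_integral_lborel_translate:
  fixes g :: "real \<Rightarrow> ennreal"
  assumes "g \<in> borel_measurable borel"
  shows "(\<integral>\<^sup>+ u. g u \<partial>lborel) = (\<integral>\<^sup>+ x. g (x - y) \<partial>lborel)"
  using nn_integral_real_affine[of g 1 "-y"] assms by simp

lemma normal_density_centered:
  assumes "0 < t"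
  shows "normal_density 0 t u = exp (- u\<^sup>2 / (2 * t\<^sup>2)) / (t * sqrt (2 * pi))"
proof -
  have "sqrt (2 * pi * t\<^sup>2) = t * sqrt (2 * pi)"
    using assms by (metis real_sqrt_abs real_sqrt_mult abs_of_pos mult.commute)
  then show ?thesis unfolding normal_density_def by simp
qed

lemma normal_density_le_inverse:
  assumes "0 < t"
  shows "normal_density 0 t u \<le> 1 / t"
proof -
  have "1 \<le> sqrt (2 * pi)" using pi_gt3 by (simp add: real_sqrt_ge_one)
  then have "t \<le> t * sqrt (2 * pi)" using assms by simp
  moreover have "exp (- u\<^sup>2 / (2 * t\<^sup>2)) \<le> 1" by simp
  ultimately have "exp (- u\<^sup>2 / (2 * t\<^sup>2)) / (t * sqrt (2 * pi)) \<le> 1 / t"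
    using assms by (intro frac_le) auto
  then show ?thesis by (simp only: normal_density_centered[OF assms])
qed

lemma normal_density_antimono:
  assumes "0 < t" "\<bar>u\<bar> \<le> \<bar>v\<bar>"
  shows "normal_density 0 t v \<le> normal_density 0 t u"
proof -
  have "u\<^sup>2 \<le> v\<^sup>2" using assms by (simp add: abs_le_square_iff)
  then have "- v\<^sup>2 / (2 * t\<^sup>2) \<le> - u\<^sup>2 / (2 * t\<^sup>2)"
    by (intro divide_right_mono) (use assms in auto)
  then show ?thesis
    using assms by (simp add: normal_density_centered divide_right_mono)
qed

lemma ln_normal_density:
  assumes "0 < t"
  shows "ln (normal_density 0 t u) = - ln t - ln (sqrt (2 * pi)) - u\<^sup>2 / (2 * t\<^sup>2)"
  using assms by (simp add: normal_density_centered ln_div ln_mult)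

lemma nn_integral_normal_density:
  "0 < t \<Longrightarrow> (\<integral>\<^sup>+ u. ennreal (normal_density 0 t u) \<partial>lborel) = 1"
  using prob_space.emeasure_space_1[OF prob_space_normal_density, of t 0]
  by (simp add: emeasure_density)

lemma nn_integral_normal_density_translate:
  "0 < t \<Longrightarrow> (\<integral>\<^sup>+ x. ennreal (normal_density 0 t (x - y)) \<partial>lborel) = 1"
  using nn_integral_lborel_translate[of "\<lambda>u. ennreal (normal_density 0 t u)" y]
  by (simp add: nn_integral_normal_density)

lemma nn_integral_normal_density_sq:
  assumes t: "0 < t"
  shows "(\<integral>\<^sup>+ u. ennreal (normal_density 0 t u) * ennreal ((u / t)\<^sup>2) \<partial>lborel) = 1"
proof -
  have "has_bochner_integral lborel (\<lambda>u. normal_density 0 t u * (u - 0) ^ (2 * 1))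
      (fact (2 * 1) / ((2 / t\<^sup>2) ^ 1 * fact 1))"
    by (rule normal_moment_even[OF t])
  then have "has_bochner_integral lborel (\<lambda>u. normal_density 0 t u * u\<^sup>2) (t\<^sup>2)"
    using t by simp
  from has_bochner_integral_mult_left[OF this, of "1 / t\<^sup>2"]
  have "has_bochner_integral lborel (\<lambda>u. normal_density 0 t u * u\<^sup>2 * (1 / t\<^sup>2)) (t\<^sup>2 * (1 / t\<^sup>2))"
    by (simp add: mult.commute)
  then have sq: "has_bochner_integral lborel (\<lambda>u. normal_density 0 t u * (u / t)\<^sup>2) 1"
    using t by (simp add: power_divide)
  have "(\<integral>\<^sup>+ u. ennreal (normal_density 0 t u * (u / t)\<^sup>2) \<partial>lborel) = 1"
    using nn_integral_eq_integral[OF integrable.intros[OF sq]] has_bochner_integral_integral_eq[OF sq]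
    by simp
  then show ?thesis by (simp add: ennreal_mult'')
qed

lemma nn_integral_exp_neg_abs_le:
  assumes t: "0 < t"
  shows "(\<integral>\<^sup>+ z. ennreal (exp (- \<bar>x - z\<bar> / t)) \<partial>lborel) \<le> ennreal (2 * t)"
proof -
  let ?ed = "\<lambda>u. ennreal (exponential_density (1 / t) u)"
  have ed: "(\<integral>\<^sup>+ u. ?ed u \<partial>lborel) = 1"
    using prob_space.emeasure_space_1[OF prob_space_exponential_density[of "1/t"]] t
    by (simp add: emeasure_density)
  moreover have "(\<integral>\<^sup>+ u. ?ed (- u) \<partial>lborel) = 1"
    using nn_integral_real_affine[of ?ed "-1" 0] ed by simp
  moreover have "(\<integral>\<^sup>+ z. ennreal (exp (- \<bar>x - z\<bar> / t)) \<partial>lborel) =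
      (\<integral>\<^sup>+ u. ennreal (exp (- \<bar>u\<bar> / t)) \<partial>lborel)"
    using nn_integral_lborel_translate[of "\<lambda>u. ennreal (exp (- \<bar>u\<bar> / t))" x]
    by (simp add: abs_minus_commute)
  moreover have "\<dots> \<le> (\<integral>\<^sup>+ u. ennreal t * ?ed u + ennreal t * ?ed (- u) \<partial>lborel)"
  proof (rule nn_integral_mono)
    fix u :: real
    have "exp (- \<bar>u\<bar> / t) \<le> t * exponential_density (1 / t) u + t * exponential_density (1 / t) (- u)"
      using t by (cases "u < 0"; cases "u = 0") (auto simp: exponential_density_def field_simps)
    then show "ennreal (exp (- \<bar>u\<bar> / t)) \<le> ennreal t * ?ed u + ennreal t * ?ed (- u)"
      using t by (simp flip: ennreal_mult' ennreal_plus del: ennreal_plus)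
  qed
  moreover have "\<dots> = ennreal t * (\<integral>\<^sup>+ u. ?ed u \<partial>lborel) + ennreal t * (\<integral>\<^sup>+ u. ?ed (- u) \<partial>lborel)"
    by (subst nn_integral_add) (auto simp: nn_integral_cmult)
  ultimately show ?thesis
    using t by (simp flip: ennreal_plus del: ennreal_plus)
qed

context real_distribution
begin

lemma nn_integral_swap_lborel:
  assumes "case_prod f \<in> borel_measurable (lborel \<Otimes>\<^sub>M M)"
  shows "(\<integral>\<^sup>+ y. \<integral>\<^sup>+ x. f x y \<partial>lborel \<partial>M) = (\<integral>\<^sup>+ x. \<integral>\<^sup>+ y. f x y \<partial>M \<partial>lborel)"
proof -
  interpret pair_sigma_finite lborel M ..
  show ?thesis by (rule Fubini'[OF assms])
qed

definition smoothed_density :: "real \<Rightarrow> real \<Rightarrow> real" where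
  "smoothed_density t x = enn2real (\<integral>\<^sup>+ y. ennreal (normal_density 0 t (x - y)) \<partial>M)"

lemma borel_measurable_smoothed_density[measurable]: "smoothed_density t \<in> borel_measurable borel"
  unfolding smoothed_density_def[abs_def] by measurable

lemma nn_integral_normal_density_eq_smoothed_density:
  assumes t: "0 < t"
  shows "(\<integral>\<^sup>+ y. ennreal (normal_density 0 t (x - y)) \<partial>M) = ennreal (smoothed_density t x)"
proof -
  have "(\<integral>\<^sup>+ y. ennreal (normal_density 0 t (x - y)) \<partial>M) \<le> (\<integral>\<^sup>+ y. ennreal (1 / t) \<partial>M)"
    by (intro nn_integral_mono ennreal_leI normal_density_le_inverse[OF t])
  also have "\<dots> < \<infinity>" using emeasure_space_1 by simp
  finally show ?thesis
    unfolding smoothed_density_def by (simp add: less_top ennreal_enn2real)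
qed

lemma smoothed_density_le:
  assumes t: "0 < t"
  shows "smoothed_density t x \<le> 1 / t"
proof -
  have "ennreal (smoothed_density t x) \<le> (\<integral>\<^sup>+ y. ennreal (1 / t) \<partial>M)"
    unfolding nn_integral_normal_density_eq_smoothed_density[OF t, symmetric]
    by (intro nn_integral_mono ennreal_leI normal_density_le_inverse[OF t])
  then show ?thesis using t emeasure_space_1 by (simp add: ennreal_le_iff)
qed

lemma smoothed_density_pos:
  assumes t: "0 < t"
  shows "0 < smoothed_density t x"
proof -
  have "(\<integral>\<^sup>+ y. ennreal (normal_density 0 t (x - y)) \<partial>M) \<noteq> 0"
  proof
    assume "(\<integral>\<^sup>+ y. ennreal (normal_density 0 t (x - y)) \<partial>M) = 0"
    then have "AE y in M. ennreal (normal_density 0 t (x - y)) = 0"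
      by (subst (asm) nn_integral_0_iff_AE) auto
    then have "AE y in M. False"
      by eventually_elim (metis ennreal_eq_0_iff not_le normal_density_pos[OF t])
    then show False by simp
  qed
  then show ?thesis
    unfolding nn_integral_normal_density_eq_smoothed_density[OF t] by (metis ennreal_eq_0_iff not_le)
qed

text \<open>Integration against the joint law of \<open>(Y + G, Y)\<close> with \<open>Y \<sim> M\<close> and an independent
  centered Gaussian \<open>G\<close> of variance \<open>t\<^sup>2\<close>; its marginals are
  \<open>smoothed_density t x dx\<close> and \<open>M\<close>.\<close>

definition coupling_integral :: "real \<Rightarrow> (real \<Rightarrow> real \<Rightarrow> ennreal) \<Rightarrow> ennreal" where
  "coupling_integral t f = (\<integral>\<^sup>+ y. \<integral>\<^sup>+ x. ennreal (normal_density 0 t (x - y)) * f x y \<partial>lborel \<partial>M)"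

lemma coupling_integral_fst:
  assumes t: "0 < t" and [measurable]: "g \<in> borel_measurable borel"
  shows "coupling_integral t (\<lambda>x y. g x) = (\<integral>\<^sup>+ x. ennreal (smoothed_density t x) * g x \<partial>lborel)"
proof -
  have "coupling_integral t (\<lambda>x y. g x) =
      (\<integral>\<^sup>+ x. \<integral>\<^sup>+ y. ennreal (normal_density 0 t (x - y)) * g x \<partial>M \<partial>lborel)"
    unfolding coupling_integral_def by (rule nn_integral_swap_lborel) measurable
  also have "\<dots> = (\<integral>\<^sup>+ x. ennreal (smoothed_density t x) * g x \<partial>lborel)"
    by (intro nn_integral_cong) (simp add: nn_integral_multc nn_integral_normal_density_eq_smoothed_density[OF t])
  finally show ?thesis .
qed

lemma coupling_integral_diff:
  assumes t: "0 < t" and [measurable]: "k \<in> borel_measurable borel"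
  shows "coupling_integral t (\<lambda>x y. k (x - y)) = (\<integral>\<^sup>+ u. ennreal (normal_density 0 t u) * k u \<partial>lborel)"
proof -
  have "coupling_integral t (\<lambda>x y. k (x - y)) =
      (\<integral>\<^sup>+ y. (\<integral>\<^sup>+ u. ennreal (normal_density 0 t u) * k u \<partial>lborel) \<partial>M)"
    unfolding coupling_integral_def
    by (intro nn_integral_cong nn_integral_lborel_translate[symmetric]) measurable
  then show ?thesis using emeasure_space_1 by simp
qed

lemma coupling_integral_snd:
  assumes t: "0 < t"
  shows "coupling_integral t (\<lambda>x y. h y) = (\<integral>\<^sup>+ y. h y \<partial>M)"
  unfolding coupling_integral_def
  by (intro nn_integral_cong)
    (simp add: nn_integral_multc nn_integral_normal_density_translate[OF t])

lemma coupling_integral_const: "0 < t \<Longrightarrow> coupling_integral t (\<lambda>x y. c) = c"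
  using coupling_integral_snd[of t "\<lambda>y. c"] emeasure_space_1 by simp

lemma coupling_integral_add:
  assumes [measurable]: "case_prod f \<in> borel_measurable (borel \<Otimes>\<^sub>M borel)"
    "case_prod g \<in> borel_measurable (borel \<Otimes>\<^sub>M borel)"
  shows "coupling_integral t (\<lambda>x y. f x y + g x y) = coupling_integral t f + coupling_integral t g"
proof -
  let ?\<phi> = "\<lambda>x y. ennreal (normal_density 0 t (x - y))"
  have "coupling_integral t (\<lambda>x y. f x y + g x y) =
      (\<integral>\<^sup>+ y. (\<integral>\<^sup>+ x. ?\<phi> x y * f x y \<partial>lborel) + (\<integral>\<^sup>+ x. ?\<phi> x y * g x y \<partial>lborel) \<partial>M)"
    unfolding coupling_integral_def distrib_left by (intro nn_integral_cong nn_integral_add) measurable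
  also have "\<dots> = coupling_integral t f + coupling_integral t g"
    unfolding coupling_integral_def by (rule nn_integral_add) measurable
  finally show ?thesis .
qed

lemma coupling_integral_mono:
  assumes "AE y in M. \<forall>x. f x y \<le> g x y"
  shows "coupling_integral t f \<le> coupling_integral t g"
proof -
  from assms have "AE y in M. (\<integral>\<^sup>+ x. ennreal (normal_density 0 t (x - y)) * f x y \<partial>lborel) \<le>
      (\<integral>\<^sup>+ x. ennreal (normal_density 0 t (x - y)) * g x y \<partial>lborel)"
    by eventually_elim (auto intro!: nn_integral_mono mult_left_mono)
  then show ?thesis unfolding coupling_integral_def by (rule nn_integral_mono_AE)
qed

lemma coupling_integral_sq:
  "0 < t \<Longrightarrow> coupling_integral t (\<lambda>x y. ennreal (((x - y) / t)\<^sup>2)) = 1"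
  using coupling_integral_diff[of t "\<lambda>u. ennreal ((u / t)\<^sup>2)"]
  by (simp add: nn_integral_normal_density_sq)

lemma smoothed_eq_density:
  assumes t: "0 < t"
  shows "smoothed M t = density lborel (\<lambda>x. ennreal (smoothed_density t x))"
proof (rule measure_eqI)
  show "sets (smoothed M t) = sets (density lborel (\<lambda>x. ennreal (smoothed_density t x)))"
    by (simp add: smoothed_def gauss_law_def)
  fix A assume "A \<in> sets (smoothed M t)"
  then have A[measurable]: "A \<in> sets borel" by (simp add: smoothed_def gauss_law_def)
  interpret G: prob_space "gauss_law t"
    unfolding gauss_law_def by (rule prob_space_normal_density[OF t])
  have "emeasure (smoothed M t) A = (\<integral>\<^sup>+ y. \<integral>\<^sup>+ u. indicator A (y + u) \<partial>gauss_law t \<partial>M)"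
    unfolding smoothed_def
    by (rule convolution_emeasure'[OF A finite_measure_axioms G.finite_measure_axioms])
      (simp_all add: gauss_law_def)
  also have "\<dots> = (\<integral>\<^sup>+ y. \<integral>\<^sup>+ u. ennreal (normal_density 0 t u) * indicator A (y + u) \<partial>lborel \<partial>M)"
    unfolding gauss_law_def by (intro nn_integral_cong, subst nn_integral_density) auto
  also have "\<dots> = coupling_integral t (\<lambda>x y. indicator A x)"
    unfolding coupling_integral_def
  proof (rule nn_integral_cong)
    fix y
    show "(\<integral>\<^sup>+ u. ennreal (normal_density 0 t u) * indicator A (y + u) \<partial>lborel) =
        (\<integral>\<^sup>+ x. ennreal (normal_density 0 t (x - y)) * indicator A x \<partial>lborel)"
      using nn_integral_lborel_translate[of "\<lambda>u. ennreal (normal_density 0 t u) * indicator A (y + u)" y]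
      by simp
  qed
  also have "\<dots> = emeasure (density lborel (\<lambda>x. ennreal (smoothed_density t x))) A"
    by (simp add: coupling_integral_fst[OF t] emeasure_density)
  finally show "emeasure (smoothed M t) A = emeasure (density lborel (\<lambda>x. ennreal (smoothed_density t x))) A" .
qed

lemma nn_integral_smoothed_density:
  "0 < t \<Longrightarrow> (\<integral>\<^sup>+ x. ennreal (smoothed_density t x) \<partial>lborel) = 1"
  using coupling_integral_fst[of t "\<lambda>x. 1"] coupling_integral_const[of t 1] by simp

definition entropy_pos :: "real \<Rightarrow> ennreal" where
  "entropy_pos t =
    (\<integral>\<^sup>+ x. ennreal (max 0 (smoothed_density t x * ln (smoothed_density t x))) \<partial>lborel)"

definition entropy_neg :: "real \<Rightarrow> ennreal" where
  "entropy_neg t =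
    (\<integral>\<^sup>+ x. ennreal (max 0 (- (smoothed_density t x * ln (smoothed_density t x)))) \<partial>lborel)"

lemma entropy_meas_smoothed:
  assumes t: "0 < t"
  shows "entropy_meas (smoothed M t) = enn2ereal (entropy_pos t) - enn2ereal (entropy_neg t)"
proof -
  have "AE x in lborel. ennreal (smoothed_density t x) = RN_deriv lborel (smoothed M t) x"
    unfolding smoothed_eq_density[OF t]
    by (rule sigma_finite_measure.RN_deriv_unique[OF _ _ refl]) (unfold_locales, measurable)
  then have "AE x in lborel. enn2real (RN_deriv lborel (smoothed M t) x) = smoothed_density t x"
    by eventually_elim (metis enn2real_ennreal less_imp_le smoothed_density_pos[OF t])
  then show ?thesis
    unfolding entropy_meas_def entropy_H_def entropy_pos_def entropy_neg_def
    by (intro arg_cong2[where f="\<lambda>a b. enn2ereal a - enn2ereal b"] nn_integral_cong_AE) auto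
qed

lemma coupling_integral_max0_ln:
  assumes t: "0 < t"
  shows "coupling_integral t (\<lambda>x y. ennreal (max 0 (c * ln (smoothed_density t x)))) =
    (\<integral>\<^sup>+ x. ennreal (max 0 (c * (smoothed_density t x * ln (smoothed_density t x)))) \<partial>lborel)"
proof -
  have p: "0 \<le> smoothed_density t x" for x
    using smoothed_density_pos[OF t, of x] by simp
  have "coupling_integral t (\<lambda>x y. ennreal (max 0 (c * ln (smoothed_density t x)))) =
      (\<integral>\<^sup>+ x. ennreal (smoothed_density t x) * ennreal (max 0 (c * ln (smoothed_density t x))) \<partial>lborel)"
    by (rule coupling_integral_fst[OF t]) measurable
  also have "\<dots> = (\<integral>\<^sup>+ x. ennreal (max 0 (c * (smoothed_density t x * ln (smoothed_density t x)))) \<partial>lborel)"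
    using p by (intro nn_integral_cong) (simp add: max_mult_distrib_left ac_simps flip: ennreal_mult')
  finally show ?thesis .
qed

lemma entropy_pos_eq_coupling:
  "0 < t \<Longrightarrow> entropy_pos t = coupling_integral t (\<lambda>x y. ennreal (max 0 (ln (smoothed_density t x))))"
  using coupling_integral_max0_ln[of t 1] by (simp add: entropy_pos_def)

lemma entropy_neg_eq_coupling:
  "0 < t \<Longrightarrow> entropy_neg t = coupling_integral t (\<lambda>x y. ennreal (max 0 (- ln (smoothed_density t x))))"
  using coupling_integral_max0_ln[of t "-1"] by (simp add: entropy_neg_def)

lemma entropy_pos_le_abs_ln:
  assumes t: "0 < t" "t < 1"
  shows "entropy_pos t \<le> ennreal \<bar>ln t\<bar>"
proof -
  have "entropy_pos t \<le> coupling_integral t (\<lambda>x y. ennreal \<bar>ln t\<bar>)"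
    unfolding entropy_pos_eq_coupling[OF t(1)]
  proof (intro coupling_integral_mono AE_I2 allI ennreal_leI)
    fix x
    have "ln (smoothed_density t x) \<le> ln (1 / t)"
      using smoothed_density_le[OF t(1), of x] smoothed_density_pos[OF t(1), of x] t by simp
    then show "max 0 (ln (smoothed_density t x)) \<le> \<bar>ln t\<bar>" using t by (simp add: ln_div)
  qed
  then show ?thesis by (simp add: coupling_integral_const[OF t(1)])
qed

definition interval_mass :: "real \<Rightarrow> real \<Rightarrow> real" where
  "interval_mass t y = measure M {y - t/2 .. y + t/2}"

lemma borel_measurable_interval_mass[measurable]: "interval_mass t \<in> borel_measurable borel"
proof -
  let ?Q = "{z \<in> space (borel \<Otimes>\<^sub>M M). fst z - t/2 \<le> snd z \<and> snd z \<le> fst z + t/2}"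
  have "?Q \<in> sets (borel \<Otimes>\<^sub>M M)" by measurable
  then have "(\<lambda>y. emeasure M (Pair y -` ?Q)) \<in> borel_measurable borel"
    by (rule measurable_emeasure_Pair)
  moreover have "(\<lambda>y. emeasure M (Pair y -` ?Q)) = (\<lambda>y. emeasure M {y - t/2 .. y + t/2})"
    by (auto simp: space_pair_measure intro!: ext arg_cong[where f="emeasure M"])
  ultimately have "(\<lambda>y. emeasure M {y - t/2 .. y + t/2}) \<in> borel_measurable borel"
    by metis
  then show ?thesis unfolding interval_mass_def[abs_def] measure_def by measurable
qed

lemma emeasure_interval_eq_interval_mass:
  "emeasure M {y - t/2 .. y + t/2} = ennreal (interval_mass t y)"
  by (simp add: interval_mass_def emeasure_eq_measure)

lemma interval_mass_nonneg: "0 \<le> interval_mass t y"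
  by (simp add: interval_mass_def)

lemma neg_ln_interval_mass_nonneg: "0 \<le> - ln (interval_mass t y)"
proof -
  have "interval_mass t y \<le> 1" by (simp add: interval_mass_def)
  then show ?thesis using interval_mass_nonneg[of t y] by (cases "interval_mass t y = 0") auto
qed

lemma AE_interval_mass_pos:
  assumes t: "0 < t"
  shows "AE y in M. 0 < interval_mass t y"
proof (rule AE_I')
  let ?S = "\<lambda>q::real. {q - t/4 .. q + t/4}"
  let ?I = "{q \<in> \<rat>. emeasure M (?S q) = 0}"
  show "(\<Union>q\<in>?I. ?S q) \<in> null_sets M"
    by (rule null_sets_UN') (auto intro: countable_subset[OF _ countable_rat] simp: null_sets_def)
  show "{y \<in> space M. \<not> 0 < interval_mass t y} \<subseteq> (\<Union>q\<in>?I. ?S q)"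
  proof safe
    fix y assume "\<not> 0 < interval_mass t y"
    then have "interval_mass t y = 0"
      using measure_nonneg[of M "{y - t/2 .. y + t/2}"] unfolding interval_mass_def by linarith
    then have y0: "emeasure M {y - t/2 .. y + t/2} = 0"
      by (simp add: emeasure_interval_eq_interval_mass)
    obtain q where q: "q \<in> \<rat>" "y - t/4 < q" "q < y"
      using Rats_dense_in_real[of "y - t/4" y] t by auto
    have "emeasure M (?S q) \<le> emeasure M {y - t/2 .. y + t/2}"
      using q t by (intro emeasure_mono) auto
    with y0 q t show "y \<in> (\<Union>q\<in>?I. ?S q)" by auto
  qed
qed

lemma interval_mass_mult_normal_density_le:
  assumes t: "0 < t"
  shows "interval_mass t y * normal_density 0 t (\<bar>x - y\<bar> + t/2) \<le> smoothed_density t x"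
proof -
  let ?c = "normal_density 0 t (\<bar>x - y\<bar> + t/2)"
  have "ennreal (interval_mass t y * ?c) = (\<integral>\<^sup>+ y'. ennreal ?c * indicator {y - t/2 .. y + t/2} y' \<partial>M)"
    by (subst nn_integral_cmult_indicator)
      (auto simp: emeasure_interval_eq_interval_mass ennreal_mult' interval_mass_nonneg mult.commute)
  also have "\<dots> \<le> (\<integral>\<^sup>+ y'. ennreal (normal_density 0 t (x - y')) \<partial>M)"
  proof (intro nn_integral_mono)
    fix y'
    show "ennreal ?c * indicator {y - t/2 .. y + t/2} y' \<le> ennreal (normal_density 0 t (x - y'))"
      using t by (auto simp: indicator_def intro!: ennreal_leI normal_density_antimono)
  qed
  finally show ?thesis
    using smoothed_density_pos[OF t, of x] by (simp add: nn_integral_normal_density_eq_smoothed_density[OF t])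
qed

lemma neg_ln_smoothed_density_le:
  assumes t: "0 < t" and m: "0 < interval_mass t y"
  shows "- ln (smoothed_density t x) \<le> - ln (interval_mass t y) + ln t + 3 + ((x - y) / t)\<^sup>2"
proof -
  let ?d = "\<bar>x - y\<bar> + t/2"
  have "ln (interval_mass t y * normal_density 0 t ?d) \<le> ln (smoothed_density t x)"
    using interval_mass_mult_normal_density_le[OF t, of y x] m normal_density_pos[OF t]
      smoothed_density_pos[OF t, of x]
    by (subst ln_le_cancel_iff) auto
  moreover have "ln (interval_mass t y * normal_density 0 t ?d) =
      ln (interval_mass t y) - ln t - ln (sqrt (2 * pi)) - ?d\<^sup>2 / (2 * t\<^sup>2)"
    unfolding ln_mult_pos[OF m normal_density_pos[OF t]] ln_normal_density[OF t] by simp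
  moreover have "ln (sqrt (2 * pi)) \<le> 2"
  proof -
    have "2 * pi \<le> 3\<^sup>2" using pi_less_4 by simp
    then have "sqrt (2 * pi) \<le> 3" by (simp add: real_sqrt_le_iff real_le_lsqrt)
    moreover have "ln (sqrt (2 * pi)) \<le> sqrt (2 * pi) - 1" by (rule ln_le_minus_one) simp
    ultimately show ?thesis by simp
  qed
  moreover have "?d\<^sup>2 / (2 * t\<^sup>2) \<le> ((x - y) / t)\<^sup>2 + 1/4"
  proof -
    have "\<bar>x - y\<bar> * t \<le> (x - y)\<^sup>2 + t\<^sup>2 / 4"
      using sum_squares_ge_zero[of "\<bar>x - y\<bar> - t/2" 0] by (simp add: power2_eq_square algebra_simps)
    then have "?d\<^sup>2 \<le> 2 * (x - y)\<^sup>2 + t\<^sup>2 / 2"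
      by (simp add: power2_eq_square algebra_simps)
    then have "?d\<^sup>2 / (2 * t\<^sup>2) \<le> (2 * (x - y)\<^sup>2 + t\<^sup>2 / 2) / (2 * t\<^sup>2)"
      using t by (intro divide_right_mono) auto
    also have "\<dots> = ((x - y) / t)\<^sup>2 + 1/4"
      using t by (simp add: field_simps power2_eq_square)
    finally show ?thesis .
  qed
  ultimately show ?thesis by linarith
qed

lemma entropy_neg_add_abs_ln_le:
  assumes t: "0 < t" "t < 1"
  shows "entropy_neg t + ennreal \<bar>ln t\<bar> \<le>
    (\<integral>\<^sup>+ y. ennreal (- ln (interval_mass t y)) \<partial>M) + entropy_pos t + 4"
proof -
  let ?p = "smoothed_density t" and ?m = "interval_mass t"
  have "entropy_neg t + ennreal \<bar>ln t\<bar> =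
      coupling_integral t (\<lambda>x y. ennreal (max 0 (- ln (?p x))) + ennreal \<bar>ln t\<bar>)"
    by (simp add: coupling_integral_add entropy_neg_eq_coupling[OF t(1)] coupling_integral_const[OF t(1)])
  also have "\<dots> \<le> coupling_integral t (\<lambda>x y. ennreal (- ln (?m y)) + ennreal (max 0 (ln (?p x))) +
      ennreal 3 + ennreal (((x - y) / t)\<^sup>2))"
  proof (intro coupling_integral_mono)
    show "AE y in M. \<forall>x. ennreal (max 0 (- ln (?p x))) + ennreal \<bar>ln t\<bar> \<le>
      ennreal (- ln (?m y)) + ennreal (max 0 (ln (?p x))) + ennreal 3 + ennreal (((x - y) / t)\<^sup>2)"
      using AE_interval_mass_pos[OF t(1)]
    proof eventually_elim
      case (elim y)
      show ?case
      proof
        fix x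
        have "max 0 (- ln (?p x)) + \<bar>ln t\<bar> \<le> - ln (?m y) + max 0 (ln (?p x)) + 3 + ((x - y) / t)\<^sup>2"
          using neg_ln_smoothed_density_le[OF t(1) elim, of x] t by (simp add: max_def)
        then have "ennreal (max 0 (- ln (?p x)) + \<bar>ln t\<bar>) \<le>
            ennreal (- ln (?m y) + max 0 (ln (?p x)) + 3 + ((x - y) / t)\<^sup>2)"
          by (rule ennreal_leI)
        then show "ennreal (max 0 (- ln (?p x))) + ennreal \<bar>ln t\<bar> \<le>
            ennreal (- ln (?m y)) + ennreal (max 0 (ln (?p x))) + ennreal 3 + ennreal (((x - y) / t)\<^sup>2)"
          by (simp only: ennreal_plus add_nonneg_nonneg max.cobounded1 abs_ge_zero zero_le_numeral
              zero_le_power2 neg_ln_interval_mass_nonneg)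
      qed
    qed
  qed
  also have "\<dots> = coupling_integral t (\<lambda>x y. ennreal (- ln (?m y))) +
      coupling_integral t (\<lambda>x y. ennreal (max 0 (ln (?p x)))) + coupling_integral t (\<lambda>x y. ennreal 3) +
      coupling_integral t (\<lambda>x y. ennreal (((x - y) / t)\<^sup>2))"
    by (simp add: coupling_integral_add)
  also have "\<dots> = (\<integral>\<^sup>+ y. ennreal (- ln (?m y)) \<partial>M) + entropy_pos t + ennreal 3 + 1"
    by (simp only: coupling_integral_snd[OF t(1)] entropy_pos_eq_coupling[OF t(1), symmetric]
        nn_integral_const emeasure_space_1 mult_1_right coupling_integral_sq[OF t(1)])
  finally show ?thesis by (simp add: add.assoc)
qed

lemma inverse_interval_mass_le:
  assumes t: "0 < t"
  shows "inverse (ennreal (interval_mass t y)) \<le> ennreal (2 / t) *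
    (\<integral>\<^sup>+ z. indicator {y - t/4 .. y + t/4} z * inverse (ennreal (interval_mass (t/2) z)) \<partial>lborel)"
proof -
  have "ennreal (t / 2) * inverse (ennreal (interval_mass t y)) =
      (\<integral>\<^sup>+ z. indicator {y - t/4 .. y + t/4} z * inverse (ennreal (interval_mass t y)) \<partial>lborel)"
    using t by (simp add: nn_integral_multc)
  also have "\<dots> \<le> (\<integral>\<^sup>+ z. indicator {y - t/4 .. y + t/4} z * inverse (ennreal (interval_mass (t/2) z)) \<partial>lborel)"
  proof (intro nn_integral_mono)
    fix z
    show "indicator {y - t/4 .. y + t/4} z * inverse (ennreal (interval_mass t y)) \<le>
        indicator {y - t/4 .. y + t/4} z * inverse (ennreal (interval_mass (t/2) z))"
    proof (cases "z \<in> {y - t/4 .. y + t/4}")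
      case True
      then have "interval_mass (t/2) z \<le> interval_mass t y"
        unfolding interval_mass_def by (intro finite_measure_mono) auto
      then have "inverse (ennreal (interval_mass t y)) \<le> inverse (ennreal (interval_mass (t/2) z))"
        using interval_mass_nonneg[of "t/2" z]
        by (cases "interval_mass (t/2) z = 0") (auto simp: inverse_ennreal ennreal_leI)
      then show ?thesis using True by simp
    qed simp
  qed
  finally have "ennreal (2 / t) * (ennreal (t / 2) * inverse (ennreal (interval_mass t y))) \<le> ennreal (2 / t) *
      (\<integral>\<^sup>+ z. indicator {y - t/4 .. y + t/4} z * inverse (ennreal (interval_mass (t/2) z)) \<partial>lborel)"
    by (rule mult_left_mono) simp
  then show ?thesis
    using t by (simp add: mult.assoc[symmetric] flip: ennreal_mult')
qed

lemma nn_integral_exp_near_mult_inverse_mass_le: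
  assumes t: "0 < t"
  shows "(\<integral>\<^sup>+ y. ennreal (exp (- \<bar>x - y\<bar> / t)) * indicator {z - t/4 .. z + t/4} y \<partial>M) *
    inverse (ennreal (interval_mass (t/2) z)) \<le> ennreal (3 * exp (- \<bar>x - z\<bar> / t))"
proof -
  let ?c = "3 * exp (- \<bar>x - z\<bar> / t)"
  have "(\<integral>\<^sup>+ y. ennreal (exp (- \<bar>x - y\<bar> / t)) * indicator {z - t/4 .. z + t/4} y \<partial>M) \<le>
      (\<integral>\<^sup>+ y. ennreal ?c * indicator {z - t/4 .. z + t/4} y \<partial>M)"
  proof (intro nn_integral_mono)
    fix y
    show "ennreal (exp (- \<bar>x - y\<bar> / t)) * indicator {z - t/4 .. z + t/4} y \<le>
        ennreal ?c * indicator {z - t/4 .. z + t/4} y"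
    proof (cases "y \<in> {z - t/4 .. z + t/4}")
      case True
      then have "\<bar>x - z\<bar> \<le> \<bar>x - y\<bar> + t" using t by auto
      then have "- \<bar>x - y\<bar> / t \<le> 1 + - \<bar>x - z\<bar> / t"
        using t by (simp add: field_simps)
      then have "exp (- \<bar>x - y\<bar> / t) \<le> exp 1 * exp (- \<bar>x - z\<bar> / t)"
        by (simp flip: exp_add)
      also have "\<dots> \<le> ?c" using exp_le by simp
      finally show ?thesis using True by (simp add: ennreal_leI)
    qed simp
  qed
  also have "\<dots> = ennreal ?c * ennreal (interval_mass (t/2) z)"
    using emeasure_interval_eq_interval_mass[of z "t/2"] by (simp add: nn_integral_cmult_indicator)
  finally have "(\<integral>\<^sup>+ y. ennreal (exp (- \<bar>x - y\<bar> / t)) * indicator {z - t/4 .. z + t/4} y \<partial>M) *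
      inverse (ennreal (interval_mass (t/2) z)) \<le>
      ennreal ?c * ennreal (interval_mass (t/2) z) * inverse (ennreal (interval_mass (t/2) z))"
    by (rule mult_right_mono) simp
  also have "\<dots> = ennreal ?c * (ennreal (interval_mass (t/2) z) * inverse (ennreal (interval_mass (t/2) z)))"
    by (simp add: mult.assoc)
  also have "\<dots> \<le> ennreal ?c * 1"
    by (intro mult_left_mono ennreal_mult_inverse_le_1) simp
  finally show ?thesis by simp
qed

definition weighted_inverse_mass :: "real \<Rightarrow> real \<Rightarrow> ennreal" where
  "weighted_inverse_mass t x =
    (\<integral>\<^sup>+ y. ennreal (exp (- \<bar>x - y\<bar> / t)) * inverse (ennreal (interval_mass t y)) \<partial>M)"

text \<open>Since \<open>[z - t/4, z + t/4] \<subseteq> [y - t/2, y + t/2]\<close> for \<open>\<bar>z - y\<bar> \<le> t/4\<close>, the weight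
  \<open>1 / interval_mass t y\<close> is at most the average of \<open>1 / interval_mass (t/2)\<close> over
  \<open>[y - t/4, y + t/4]\<close>; after exchanging the integrals, the \<open>M\<close>-mass of \<open>[z - t/4, z + t/4]\<close>
  cancels \<open>1 / interval_mass (t/2) z\<close>.\<close>

lemma weighted_inverse_mass_le:
  assumes t: "0 < t"
  shows "weighted_inverse_mass t x \<le> 12"
proof -
  let ?e = "\<lambda>y. ennreal (exp (- \<bar>x - y\<bar> / t))"
  let ?I = "\<lambda>y z. if \<bar>y - z\<bar> \<le> t/4 then 1 else 0 :: ennreal"
  let ?w = "\<lambda>z. inverse (ennreal (interval_mass (t/2) z))"
  have I: "indicator {y - t/4 .. y + t/4} z = ?I y z" "indicator {z - t/4 .. z + t/4} y = ?I y z" for y z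
    by (auto simp: indicator_def abs_le_iff field_simps split: abs_split)
  have "weighted_inverse_mass t x \<le> (\<integral>\<^sup>+ y. ?e y * (ennreal (2 / t) * (\<integral>\<^sup>+ z. ?I y z * ?w z \<partial>lborel)) \<partial>M)"
    unfolding weighted_inverse_mass_def
    by (intro nn_integral_mono mult_left_mono inverse_interval_mass_le[OF t, unfolded I(1)]) simp
  also have "\<dots> = ennreal (2 / t) * (\<integral>\<^sup>+ y. \<integral>\<^sup>+ z. ?e y * (?I y z * ?w z) \<partial>lborel \<partial>M)"
    by (simp add: nn_integral_cmult ac_simps)
  also have "\<dots> = ennreal (2 / t) * (\<integral>\<^sup>+ z. \<integral>\<^sup>+ y. ?e y * (?I y z * ?w z) \<partial>M \<partial>lborel)"
    by (subst nn_integral_swap_lborel[where f="\<lambda>z y. ?e y * (?I y z * ?w z)"]) measurable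
  also have "\<dots> \<le> ennreal (2 / t) * (\<integral>\<^sup>+ z. ennreal 3 * ?e z \<partial>lborel)"
  proof (intro mult_left_mono nn_integral_mono)
    fix z
    have "(\<integral>\<^sup>+ y. ?e y * (?I y z * ?w z) \<partial>M) =
        (\<integral>\<^sup>+ y. ?e y * indicator {z - t/4 .. z + t/4} y \<partial>M) * ?w z"
      unfolding I(2) mult.assoc[symmetric] by (rule nn_integral_multc) measurable
    also have "\<dots> \<le> ennreal 3 * ?e z"
      using nn_integral_exp_near_mult_inverse_mass_le[OF t, of x z] by (simp add: ennreal_mult)
    finally show "(\<integral>\<^sup>+ y. ?e y * (?I y z * ?w z) \<partial>M) \<le> ennreal 3 * ?e z" .
  qed simp
  also have "\<dots> = ennreal (2 / t) * (ennreal 3 * (\<integral>\<^sup>+ z. ?e z \<partial>lborel))"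
    by (subst nn_integral_cmult) simp_all
  also have "\<dots> \<le> ennreal (2 / t) * (ennreal 3 * ennreal (2 * t))"
    by (intro mult_left_mono nn_integral_exp_neg_abs_le[OF t]) simp_all
  also have "\<dots> = ennreal (2 / t * (3 * (2 * t)))"
    using t by (simp only: ennreal_mult' zero_le_numeral less_imp_le divide_nonneg_pos zero_less_numeral)
  also have "\<dots> = 12"
    using t by simp
  finally show ?thesis .
qed

definition coupling_remainder :: "real \<Rightarrow> real \<Rightarrow> real \<Rightarrow> ennreal" where
  "coupling_remainder t x y =
    ennreal (smoothed_density t x * exp (- \<bar>x - y\<bar> / t) / normal_density 0 t (x - y)) *
    inverse (ennreal (interval_mass t y))"

lemma borel_measurable_coupling_remainder[measurable]:
  "case_prod (coupling_remainder t) \<in> borel_measurable (borel \<Otimes>\<^sub>M borel)"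
  unfolding coupling_remainder_def[abs_def] by measurable

lemma coupling_integral_remainder_le:
  assumes t: "0 < t"
  shows "coupling_integral t (coupling_remainder t) \<le> 12"
proof -
  have "coupling_integral t (coupling_remainder t) = (\<integral>\<^sup>+ y. \<integral>\<^sup>+ x. ennreal (smoothed_density t x) *
      (ennreal (exp (- \<bar>x - y\<bar> / t)) * inverse (ennreal (interval_mass t y))) \<partial>lborel \<partial>M)"
    unfolding coupling_integral_def coupling_remainder_def
  proof (intro nn_integral_cong)
    fix x y
    have "ennreal (normal_density 0 t (x - y)) *
        ennreal (smoothed_density t x * exp (- \<bar>x - y\<bar> / t) / normal_density 0 t (x - y)) =
        ennreal (smoothed_density t x) * ennreal (exp (- \<bar>x - y\<bar> / t))"
      using smoothed_density_pos[OF t, of x] normal_density_pos[OF t, of 0 "x - y"]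
      by (simp flip: ennreal_mult')
    then show "ennreal (normal_density 0 t (x - y)) *
        (ennreal (smoothed_density t x * exp (- \<bar>x - y\<bar> / t) / normal_density 0 t (x - y)) *
          inverse (ennreal (interval_mass t y))) =
        ennreal (smoothed_density t x) * (ennreal (exp (- \<bar>x - y\<bar> / t)) * inverse (ennreal (interval_mass t y)))"
      by (simp add: mult.assoc[symmetric])
  qed
  also have "\<dots> = (\<integral>\<^sup>+ x. ennreal (smoothed_density t x) * weighted_inverse_mass t x \<partial>lborel)"
    unfolding weighted_inverse_mass_def
    by (subst nn_integral_swap_lborel, measurable, intro nn_integral_cong nn_integral_cmult) measurable
  also have "\<dots> \<le> (\<integral>\<^sup>+ x. ennreal (smoothed_density t x) * 12 \<partial>lborel)"
    by (intro nn_integral_mono mult_left_mono weighted_inverse_mass_le[OF t]) simp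
  also have "\<dots> = 12"
    by (simp add: nn_integral_multc nn_integral_smoothed_density[OF t])
  finally show ?thesis .
qed

lemma ln_smoothed_density_sub_ln_interval_mass_le:
  assumes t: "0 < t" and m: "0 < interval_mass t y"
  shows "ln (smoothed_density t x) - ln (interval_mass t y) \<le> - ln t + ((x - y) / t)\<^sup>2 +
    smoothed_density t x * exp (- \<bar>x - y\<bar> / t) / normal_density 0 t (x - y) / interval_mass t y"
proof -
  let ?\<phi> = "normal_density 0 t (x - y)" and ?p = "smoothed_density t x"
  let ?c = "?p * exp (- \<bar>x - y\<bar> / t) / ?\<phi> / interval_mass t y"
  have \<phi>: "0 < ?\<phi>" and p: "0 < ?p"
    using normal_density_pos[OF t] smoothed_density_pos[OF t] by auto
  then have "ln ?c = ln ?p - \<bar>x - y\<bar> / t - ln ?\<phi> - ln (interval_mass t y)"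
    using m by (simp add: ln_div ln_mult_pos)
  moreover have "ln ?c \<le> ?c - 1"
    using \<phi> p m by (intro ln_le_minus_one) simp
  moreover have "ln ?\<phi> \<le> ln (1 / t)"
    using normal_density_le_inverse[OF t, of "x - y"] \<phi> t by simp
  then have "ln ?\<phi> \<le> - ln t"
    using t by (simp add: ln_div)
  moreover have "\<bar>x - y\<bar> / t \<le> 1 + ((x - y) / t)\<^sup>2"
    using abs_le_one_plus_square[of "(x - y) / t"] t by simp
  ultimately show ?thesis by linarith
qed

lemma max0_ln_smoothed_density_add_le:
  assumes t: "0 < t" "t < 1"
  shows "ennreal (max 0 (ln (smoothed_density t x))) + ennreal (- ln (interval_mass t y)) \<le>
    ennreal (max 0 (- ln (smoothed_density t x))) + ennreal \<bar>ln t\<bar> + ennreal (((x - y) / t)\<^sup>2) +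
    coupling_remainder t x y"
proof (cases "interval_mass t y = 0")
  case True
  then show ?thesis
    using smoothed_density_pos[OF t(1), of x] normal_density_pos[OF t(1), of 0 "x - y"]
    by (simp add: coupling_remainder_def ennreal_mult_top)
next
  case False
  then have m: "0 < interval_mass t y" using interval_mass_nonneg[of t y] by linarith
  let ?r = "smoothed_density t x * exp (- \<bar>x - y\<bar> / t) / normal_density 0 t (x - y) / interval_mass t y"
  have r: "0 \<le> ?r"
    using smoothed_density_pos[OF t(1), of x] normal_density_pos[OF t(1), of 0 "x - y"] m by simp
  have "max 0 (ln (smoothed_density t x)) + - ln (interval_mass t y) \<le>
      max 0 (- ln (smoothed_density t x)) + \<bar>ln t\<bar> + ((x - y) / t)\<^sup>2 + ?r"
    using ln_smoothed_density_sub_ln_interval_mass_le[OF t(1) m, of x] t by (simp add: max_def)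
  then have "ennreal (max 0 (ln (smoothed_density t x)) + - ln (interval_mass t y)) \<le>
      ennreal (max 0 (- ln (smoothed_density t x)) + \<bar>ln t\<bar> + ((x - y) / t)\<^sup>2 + ?r)"
    by (rule ennreal_leI)
  moreover have "ennreal ?r = coupling_remainder t x y"
    using smoothed_density_pos[OF t(1), of x] normal_density_pos[OF t(1), of 0 "x - y"] m
    by (simp add: coupling_remainder_def inverse_ennreal divide_inverse flip: ennreal_mult')
  ultimately show ?thesis
    using r by (simp only: ennreal_plus add_nonneg_nonneg max.cobounded1 abs_ge_zero zero_le_power2
        neg_ln_interval_mass_nonneg)
qed

lemma entropy_pos_add_le:
  assumes t: "0 < t" "t < 1"
  shows "entropy_pos t + (\<integral>\<^sup>+ y. ennreal (- ln (interval_mass t y)) \<partial>M) \<le>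
    entropy_neg t + ennreal \<bar>ln t\<bar> + 13"
proof -
  let ?p = "smoothed_density t" and ?m = "interval_mass t"
  have "entropy_pos t + (\<integral>\<^sup>+ y. ennreal (- ln (?m y)) \<partial>M) =
      coupling_integral t (\<lambda>x y. ennreal (max 0 (ln (?p x))) + ennreal (- ln (?m y)))"
    by (simp add: coupling_integral_add entropy_pos_eq_coupling[OF t(1)] coupling_integral_snd[OF t(1)])
  also have "\<dots> \<le> coupling_integral t (\<lambda>x y. ennreal (max 0 (- ln (?p x))) + ennreal \<bar>ln t\<bar> +
      ennreal (((x - y) / t)\<^sup>2) + coupling_remainder t x y)"
    by (intro coupling_integral_mono AE_I2 allI max0_ln_smoothed_density_add_le[OF t])
  also have "\<dots> = coupling_integral t (\<lambda>x y. ennreal (max 0 (- ln (?p x)))) +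
      coupling_integral t (\<lambda>x y. ennreal \<bar>ln t\<bar>) + coupling_integral t (\<lambda>x y. ennreal (((x - y) / t)\<^sup>2)) +
      coupling_integral t (coupling_remainder t)"
    by (simp add: coupling_integral_add)
  also have "\<dots> \<le> entropy_neg t + ennreal \<bar>ln t\<bar> + 1 + 12"
    unfolding entropy_neg_eq_coupling[OF t(1), symmetric] coupling_integral_const[OF t(1)]
      coupling_integral_sq[OF t(1)]
    by (intro add_left_mono coupling_integral_remainder_le[OF t(1)])
  finally show ?thesis by (simp add: add.assoc)
qed

lemma nn_integral_local_dim_t:
  assumes t: "0 < t" "t < 1"
  shows "(\<integral>\<^sup>+ y. ennreal (local_dim_t M t y) \<partial>M) =
    (\<integral>\<^sup>+ y. ennreal (- ln (interval_mass t y)) \<partial>M) / ennreal \<bar>ln t\<bar>"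
proof -
  have "ennreal (local_dim_t M t y) = ennreal (- ln (interval_mass t y)) / ennreal \<bar>ln t\<bar>" for y
    using t neg_ln_interval_mass_nonneg[of t y]
    by (simp add: local_dim_t_def interval_mass_def divide_ennreal)
  then show ?thesis by (simp add: nn_integral_divide)
qed

lemma normalized_entropy_close_to_local_dim:
  assumes t: "0 < t" "t < 1"
  shows "1 - entropy_meas (smoothed M t) / ereal \<bar>ln t\<bar> \<le>
      enn2ereal (\<integral>\<^sup>+ y. ennreal (local_dim_t M t y) \<partial>M) + ereal (13 / \<bar>ln t\<bar>)"
    and "enn2ereal (\<integral>\<^sup>+ y. ennreal (local_dim_t M t y) \<partial>M) \<le>
      1 - entropy_meas (smoothed M t) / ereal \<bar>ln t\<bar> + ereal (13 / \<bar>ln t\<bar>)"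
proof -
  let ?A = "\<integral>\<^sup>+ y. ennreal (- ln (interval_mass t y)) \<partial>M"
  have "entropy_neg t + ennreal \<bar>ln t\<bar> \<le> ?A + entropy_pos t + 4"
    by (rule entropy_neg_add_abs_ln_le[OF t])
  also have "\<dots> \<le> ?A + entropy_pos t + ennreal 13"
    by (intro add_left_mono) simp
  finally have lower: "entropy_neg t + ennreal \<bar>ln t\<bar> \<le> ?A + entropy_pos t + ennreal 13" .
  have upper: "entropy_pos t + ?A \<le> entropy_neg t + ennreal \<bar>ln t\<bar> + ennreal 13"
    using entropy_pos_add_le[OF t] by simp
  have "entropy_pos t < \<infinity>"
    using entropy_pos_le_abs_ln[OF t] by (simp add: le_less_trans)
  note close = one_minus_normalized_diff_close[OF _ _ this lower upper]
  show "1 - entropy_meas (smoothed M t) / ereal \<bar>ln t\<bar> \<le>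
      enn2ereal (\<integral>\<^sup>+ y. ennreal (local_dim_t M t y) \<partial>M) + ereal (13 / \<bar>ln t\<bar>)"
    and "enn2ereal (\<integral>\<^sup>+ y. ennreal (local_dim_t M t y) \<partial>M) \<le>
      1 - entropy_meas (smoothed M t) / ereal \<bar>ln t\<bar> + ereal (13 / \<bar>ln t\<bar>)"
    using close t by (simp_all add: entropy_meas_smoothed nn_integral_local_dim_t)
qed

end

theorem theorem3p1:
  fixes \<mu> :: "real measure"
  assumes "prob_space \<mu>" and "sets \<mu> = sets borel"
  shows "classical_entropy_dim \<mu> =
    Limsup (at_right 0) (\<lambda>t. enn2ereal (\<integral>\<^sup>+ y. ennreal (local_dim_t \<mu> t y) \<partial>\<mu>))"
proof -
  interpret real_distribution \<mu>
    by (intro real_distribution.intro real_distribution_axioms.intro assms)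
  define g where "g = (\<lambda>t. entropy_meas (smoothed \<mu> t) / ereal \<bar>ln t\<bar>)"
  define f where "f = (\<lambda>t. enn2ereal (\<integral>\<^sup>+ y. ennreal (local_dim_t \<mu> t y) \<partial>\<mu>))"
  have "eventually (\<lambda>t. 1 - g t \<le> f t + ereal (13 / \<bar>ln t\<bar>) \<and> f t \<le> 1 - g t + ereal (13 / \<bar>ln t\<bar>))
      (at_right 0)"
    using eventually_at_right_real[OF zero_less_one]
    by eventually_elim (unfold f_def g_def, intro conjI normalized_entropy_close_to_local_dim; simp)
  then have "Limsup (at_right 0) (\<lambda>t. 1 - g t) = Limsup (at_right 0) f"
    by (intro antisym Limsup_mono_up_to_null[OF tendsto_divide_abs_ln_at_right_0])
      (auto elim: eventually_mono)
  then show ?thesis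
    unfolding classical_entropy_dim_def f_def g_def by (simp add: Limsup_one_minus)
qed

end
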